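(* Let $(M^4,\widetilde g)$ be the Walker $4$-manifold of the context, let $f$ be a smooth function on $M^4$ depending only on $(u,v)$, let $Y$ be a smooth vector field with $\operatorname{div}(Y)=0$, and let $X=\nabla f+Y$. If $(M^4,\widetilde g,X,\lambda,\beta_1,\beta_2)$ is a Ricci–Yamabe soliton, then it is steady, i.e. $\lambda=0$.
   Context: $M^4$ is a smooth $4$-manifold with coordinates $(x,y,u,v)$ and metric \[ \widetilde g=\begin{pmatrix}0&0&1&0\\0&0&0&1\\1&0&F&0\\0&1&0&F\end{pmatrix},\qquad F(x,y,u,v)=x\,a(u,v)+y\,b(u,v)+c(u,v), \] with $a,b,c$ smooth real functions of $(u,v)$ only. For $\widetilde g$, $R=0$ and the only nonzero Ricci components are $R_{33}=\tfrac12 b^2-b_v$, $R_{34}=R_{43}=\tfrac12(-ab+a_v+b_u)$, $R_{44}=\tfrac12 a^2-a_u$. $\nabla f$ is the gradient and $\mathcal{L}_X$ the Lie derivative. A Ricci–Yamabe soliton $(M^4,\widetilde g,X,\lambda,\beta_1,\beta_2)$ consists of a smooth vector field $X$ and real constants $\lambda,\beta_1,\beta_2$ with $2\beta_1\mathrm{Ric}+\mathcal{L}_X\widetilde g=(-2\lambda+\beta_2R)\widetilde g$; it is steady if $\lambda=0$. *)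

theory Defs
  imports "HOL-Analysis.Analysis"
begin

text \<open>Points of M^4 = R^4 are vectors p :: real^4 with coordinates
  x = p$1, y = p$2, u = p$3, v = p$4.\<close>

definition pd :: "4 \<Rightarrow> (real^4 \<Rightarrow> real) \<Rightarrow> real^4 \<Rightarrow> real" where
  "pd k h p = deriv (\<lambda>t. h (p + t *\<^sub>R axis k 1)) 0"

fun pd_iter :: "4 list \<Rightarrow> (real^4 \<Rightarrow> real) \<Rightarrow> real^4 \<Rightarrow> real" where
  "pd_iter [] h = h"
| "pd_iter (k # ks) h = pd k (pd_iter ks h)"

definition smooth4 :: "(real^4 \<Rightarrow> real) \<Rightarrow> bool" where
  "smooth4 h \<longleftrightarrow> (\<forall>ks. pd_iter ks h differentiable_on UNIV)"

definition smooth_vf :: "(real^4 \<Rightarrow> real^4) \<Rightarrow> bool" where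
  "smooth_vf X \<longleftrightarrow> (\<forall>i. smooth4 (\<lambda>p. X p $ i))"

definition WF :: "(real \<Rightarrow> real \<Rightarrow> real) \<Rightarrow> (real \<Rightarrow> real \<Rightarrow> real) \<Rightarrow> (real \<Rightarrow> real \<Rightarrow> real)
                  \<Rightarrow> real^4 \<Rightarrow> real" where
  "WF a b c p = p$1 * a (p$3) (p$4) + p$2 * b (p$3) (p$4) + c (p$3) (p$4)"

definition gW :: "(real \<Rightarrow> real \<Rightarrow> real) \<Rightarrow> (real \<Rightarrow> real \<Rightarrow> real) \<Rightarrow> (real \<Rightarrow> real \<Rightarrow> real)
                  \<Rightarrow> real^4 \<Rightarrow> real^4^4" where
  "gW a b c p = (\<chi> i j.
     if (i = 1 \<and> j = 3) \<or> (i = 3 \<and> j = 1) \<or> (i = 2 \<and> j = 4) \<or> (i = 4 \<and> j = 2) then 1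
     else if (i = 3 \<and> j = 3) \<or> (i = 4 \<and> j = 4) then WF a b c p
     else 0)"

definition du :: "(real \<Rightarrow> real \<Rightarrow> real) \<Rightarrow> real \<Rightarrow> real \<Rightarrow> real" where
  "du h u v = deriv (\<lambda>t. h t v) u"
definition dv :: "(real \<Rightarrow> real \<Rightarrow> real) \<Rightarrow> real \<Rightarrow> real \<Rightarrow> real" where
  "dv h u v = deriv (\<lambda>t. h u t) v"

definition RicW :: "(real \<Rightarrow> real \<Rightarrow> real) \<Rightarrow> (real \<Rightarrow> real \<Rightarrow> real) \<Rightarrow> real^4 \<Rightarrow> real^4^4" where
  "RicW a b p = (let u = p$3; v = p$4 in (\<chi> i j.
     if i = 3 \<and> j = 3 then (b u v)^2 / 2 - dv b u v
     else if (i = 3 \<and> j = 4) \<or> (i = 4 \<and> j = 3) then (- a u v * b u v + dv a u v + du b u v) / 2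
     else if i = 4 \<and> j = 4 then (a u v)^2 / 2 - du a u v
     else 0))"

definition scalW :: "(real \<Rightarrow> real \<Rightarrow> real) \<Rightarrow> (real \<Rightarrow> real \<Rightarrow> real) \<Rightarrow> (real \<Rightarrow> real \<Rightarrow> real)
                     \<Rightarrow> real^4 \<Rightarrow> real" where
  "scalW a b c p = (\<Sum>i\<in>UNIV. \<Sum>j\<in>UNIV. matrix_inv (gW a b c p) $ i $ j * RicW a b p $ i $ j)"

definition lie_g :: "(real^4 \<Rightarrow> real^4^4) \<Rightarrow> (real^4 \<Rightarrow> real^4) \<Rightarrow> real^4 \<Rightarrow> real^4^4" where
  "lie_g g X p = (\<chi> i j. (\<Sum>k\<in>UNIV.
       X p $ k * pd k (\<lambda>q. g q $ i $ j) p
     + g p $ k $ j * pd i (\<lambda>q. X q $ k) p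
     + g p $ i $ k * pd j (\<lambda>q. X q $ k) p))"

definition grad_g :: "(real^4 \<Rightarrow> real^4^4) \<Rightarrow> (real^4 \<Rightarrow> real) \<Rightarrow> real^4 \<Rightarrow> real^4" where
  "grad_g g f p = matrix_inv (g p) *v (\<chi> j. pd j f p)"

definition div_g :: "(real^4 \<Rightarrow> real^4^4) \<Rightarrow> (real^4 \<Rightarrow> real^4) \<Rightarrow> real^4 \<Rightarrow> real" where
  "div_g g Y p = (\<Sum>i\<in>UNIV. pd i (\<lambda>q. sqrt \<bar>det (g q)\<bar> * Y q $ i) p) / sqrt \<bar>det (g p)\<bar>"

definition ricci_yamabe_soliton ::
  "(real^4 \<Rightarrow> real^4^4) \<Rightarrow> (real^4 \<Rightarrow> real^4^4) \<Rightarrow> (real^4 \<Rightarrow> real)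
   \<Rightarrow> (real^4 \<Rightarrow> real^4) \<Rightarrow> real \<Rightarrow> real \<Rightarrow> real \<Rightarrow> bool" where
  "ricci_yamabe_soliton g Ric R X lam \<beta>1 \<beta>2 \<longleftrightarrow>
     smooth_vf X \<and>
     (\<forall>p. (2 * \<beta>1) *\<^sub>R Ric p + lie_g g X p = (-2 * lam + \<beta>2 * R p) *\<^sub>R g p)"

end

theory Submission
  imports Defs
begin

text \<open>The Walker metric has constant determinant, inverse with vanishing lower-right block
  and scalar curvature 0. Tracing the soliton equation against the inverse metric, i.e. adding
  its (1,3) and (2,4) components after the (1,1) and (2,2) components have killed the mixed
  derivatives, gives that the coordinate divergence of X equals -4 lambda. For X = grad f + Y
  with f depending only on (u,v), the gradient lives in the x,y directions and does not depend
  on x,y, so the coordinate divergence of X is that of Y, which is div Y = 0. The argument is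
  pointwise and only needs Y to be differentiable.\<close>

lemma matrix_inv_eqI:
  fixes A B :: "'a::semiring_1^'n^'n"
  assumes "A ** B = mat 1" "B ** A = mat 1"
  shows "matrix_inv A = B"
proof -
  have "A ** matrix_inv A = mat 1 \<and> matrix_inv A ** A = mat 1"
    unfolding matrix_inv_def by (rule someI_ex) (use assms in blast)
  then have "B = (matrix_inv A ** A) ** B" by simp
  also have "\<dots> = matrix_inv A ** (A ** B)" by (simp add: matrix_mul_assoc)
  also have "\<dots> = matrix_inv A" by (simp add: assms(1))
  finally show ?thesis by simp
qed

lemma line_field_differentiable:
  fixes h :: "'a::real_normed_vector \<Rightarrow> real"
  assumes "h differentiable at p"
  shows "(\<lambda>t. h (p + t *\<^sub>R v)) field_differentiable at 0"
proof -
  have "(h \<circ> (\<lambda>t. p + t *\<^sub>R v)) differentiable at 0"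
    by (rule differentiable_chain_at) (use assms in \<open>auto intro!: derivative_intros\<close>)
  then show ?thesis
    by (simp add: o_def DERIV_deriv_iff_real_differentiable
        flip: DERIV_deriv_iff_field_differentiable)
qed

lemma pd_const_on_line:
  assumes "\<And>t. G (p + t *\<^sub>R axis k 1) = G p"
  shows "pd k G p = 0"
  unfolding pd_def using assms by simp

lemma pd_add_const_on_line:
  assumes "h differentiable at p" "\<And>t. G (p + t *\<^sub>R axis k 1) = G p"
  shows "pd k (\<lambda>q. G q + h q) p = pd k h p"
  unfolding pd_def using line_field_differentiable[OF assms(1)] assms(2) by simp

definition gW_inv :: "(real \<Rightarrow> real \<Rightarrow> real) \<Rightarrow> (real \<Rightarrow> real \<Rightarrow> real) \<Rightarrow> (real \<Rightarrow> real \<Rightarrow> real)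
                      \<Rightarrow> real^4 \<Rightarrow> real^4^4" where
  "gW_inv a b c p = (\<chi> i j.
     if (i = 1 \<and> j = 3) \<or> (i = 3 \<and> j = 1) \<or> (i = 2 \<and> j = 4) \<or> (i = 4 \<and> j = 2) then 1
     else if (i = 1 \<and> j = 1) \<or> (i = 2 \<and> j = 2) then - WF a b c p
     else 0)"

lemma matrix_inv_gW: "matrix_inv (gW a b c p) = gW_inv a b c p"
  by (rule matrix_inv_eqI)
     (simp_all add: vec_eq_iff forall_4 matrix_matrix_mult_def sum_4 gW_def gW_inv_def mat_def)

lemma scalW_eq_0: "scalW a b c p = 0"
  by (simp add: scalW_def matrix_inv_gW sum_4 gW_inv_def RicW_def Let_def)

definition gW_flat :: "real^4^4" where
  "gW_flat = (\<chi> i j.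
     if (i = 1 \<and> j = 3) \<or> (i = 3 \<and> j = 1) \<or> (i = 2 \<and> j = 4) \<or> (i = 4 \<and> j = 2) then 1 else 0)"

lemma det_gW_eq_det_gW_flat: "det (gW a b c p) = det gW_flat"
proof -
  let ?F = "WF a b c p"
  define B where "B = (\<chi> k. if k = 4 then row 4 gW_flat + ?F *s row 2 gW_flat else row k gW_flat)"
  have "gW a b c p = (\<chi> k. if k = 3 then row 3 B + ?F *s row 1 B else row k B)"
    by (simp add: vec_eq_iff forall_4 B_def row_def gW_def gW_flat_def)
  then have "det (gW a b c p) = det B" by (simp add: det_row_operation)
  also have "\<dots> = det gW_flat" unfolding B_def by (rule det_row_operation) simp
  finally show ?thesis .
qed

lemma abs_det_gW: "\<bar>det (gW a b c p)\<bar> = 1"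
proof -
  have "gW_flat ** gW_flat = mat 1"
    by (simp add: vec_eq_iff forall_4 matrix_matrix_mult_def sum_4 gW_flat_def mat_def)
  then have "(det gW_flat)\<^sup>2 = 1"
    by (metis det_mul det_I power2_eq_square)
  then show ?thesis
    by (simp add: det_gW_eq_det_gW_flat abs_square_eq_1)
qed

lemma div_gW: "div_g (gW a b c) Y p = (\<Sum>i\<in>UNIV. pd i (\<lambda>q. Y q $ i) p)"
  by (simp add: div_g_def abs_det_gW)

lemma grad_gW_uv:
  "grad_g (gW a b c) (\<lambda>q. f (q$3) (q$4)) p =
     (\<chi> i. if i = 1 then pd 3 (\<lambda>q. f (q$3) (q$4)) p
           else if i = 2 then pd 4 (\<lambda>q. f (q$3) (q$4)) p else 0)"
proof -
  have "pd k (\<lambda>q. f (q$3) (q$4)) p = 0" if "k = 1 \<or> k = 2" for k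
    by (rule pd_const_on_line) (use that in \<open>auto simp: axis_def\<close>)
  then show ?thesis
    by (simp add: grad_g_def matrix_inv_gW vec_eq_iff forall_4 matrix_vector_mult_def sum_4
        gW_inv_def)
qed

lemma soliton_eq_coordinate_divergence:
  assumes "(2 * \<beta>1) *\<^sub>R RicW a b p + lie_g (gW a b c) X p
             = (-2 * lam + \<beta>2 * scalW a b c p) *\<^sub>R gW a b c p"
  shows "(\<Sum>i\<in>UNIV. pd i (\<lambda>q. X q $ i) p) = -4 * lam"
proof -
  let ?D = "\<lambda>k i. pd k (\<lambda>q. X q $ i) p"
  have pd_gW_xy_rows: "pd k (\<lambda>q. gW a b c q $ i $ j) p = 0" if "i = 1 \<or> i = 2" for k i j
    by (rule pd_const_on_line) (use that in \<open>auto simp: gW_def\<close>)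
  note component = arg_cong[OF assms, of "\<lambda>M. M $ _ $ _"]
  note simps = lie_g_def sum_4 pd_gW_xy_rows RicW_def Let_def scalW_eq_0
  have "?D 1 3 = 0" using component[of 1 1] by (simp add: simps) (simp add: gW_def)
  moreover have "?D 2 4 = 0" using component[of 2 2] by (simp add: simps) (simp add: gW_def)
  moreover have "?D 1 1 + WF a b c p * ?D 1 3 + ?D 3 3 = -2 * lam"
    using component[of 1 3] by (simp add: simps) (simp add: gW_def algebra_simps)
  moreover have "?D 2 2 + WF a b c p * ?D 2 4 + ?D 4 4 = -2 * lam"
    using component[of 2 4] by (simp add: simps) (simp add: gW_def algebra_simps)
  ultimately show ?thesis by (simp add: sum_4)
qed

lemma coordinate_divergence_grad_uv_plus:
  assumes "\<And>i. (\<lambda>q. Y q $ i) differentiable at p"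
  shows "(\<Sum>i\<in>UNIV. pd i (\<lambda>q. (grad_g (gW a b c) (\<lambda>q. f (q$3) (q$4)) q + Y q) $ i) p)
       = (\<Sum>i\<in>UNIV. pd i (\<lambda>q. Y q $ i) p)"
proof -
  let ?F = "\<lambda>q. f (q$3) (q$4)"
  have "pd k (\<lambda>q. pd l ?F q + Y q $ k) p = pd k (\<lambda>q. Y q $ k) p" if "k = 1 \<or> k = 2" for k l
    by (rule pd_add_const_on_line[OF assms]) (use that in \<open>auto simp: pd_def axis_def\<close>)
  then show ?thesis by (simp add: grad_gW_uv sum_4)
qed

lemma smooth_vf_differentiable:
  assumes "smooth_vf Y"
  shows "(\<lambda>q. Y q $ i) differentiable at p"
proof -
  have "pd_iter [] (\<lambda>q. Y q $ i) differentiable_on UNIV"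
    using assms unfolding smooth_vf_def smooth4_def by blast
  then show ?thesis by (simp add: differentiable_on_def)
qed

theorem mainTheorem6:
  fixes a b c f :: "real \<Rightarrow> real \<Rightarrow> real"
    and Y :: "real^4 \<Rightarrow> real^4"
    and lam \<beta>1 \<beta>2 :: real
  assumes "smooth4 (\<lambda>p. a (p$3) (p$4))"
    and "smooth4 (\<lambda>p. b (p$3) (p$4))"
    and "smooth4 (\<lambda>p. c (p$3) (p$4))"
    and "smooth4 (\<lambda>p. f (p$3) (p$4))"
    and "smooth_vf Y"
    and "\<forall>p. div_g (gW a b c) Y p = 0"
    and "ricci_yamabe_soliton (gW a b c) (RicW a b) (scalW a b c)
           (\<lambda>p. grad_g (gW a b c) (\<lambda>q. f (q$3) (q$4)) p + Y p) lam \<beta>1 \<beta>2"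
  shows "lam = 0"
proof -
  let ?X = "\<lambda>q. grad_g (gW a b c) (\<lambda>q. f (q$3) (q$4)) q + Y q"
  fix p :: "real^4"
  have "-4 * lam = (\<Sum>i\<in>UNIV. pd i (\<lambda>q. ?X q $ i) p)"
    by (rule soliton_eq_coordinate_divergence[symmetric])
       (use assms(7) in \<open>unfold ricci_yamabe_soliton_def, blast\<close>)
  also have "\<dots> = (\<Sum>i\<in>UNIV. pd i (\<lambda>q. Y q $ i) p)"
    by (rule coordinate_divergence_grad_uv_plus) (rule smooth_vf_differentiable[OF assms(5)])
  also have "\<dots> = div_g (gW a b c) Y p" by (simp add: div_gW)
  also have "\<dots> = 0" using assms(6) by blast
  finally show ?thesis by simp
qed

end
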